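(* Let $V_1\subset\mathbb{R}^{d_1}$ and $V_2\subset\mathbb{R}^{d_2}$ be point configurations. Then $\mathrm{Th}(V_1\times V_2)=\max(\mathrm{Th}(V_1),\mathrm{Th}(V_2))$ and $\mathrm{Lev}(V_1\times V_2)=\max(\mathrm{Lev}(V_1),\mathrm{Lev}(V_2))$.
   Context: A point configuration is a finite set $V\subset\mathbb{R}^n$. A linear function means an affine function $\ell(x)=\delta-\langle c,x\rangle$. A linear function $\ell$ nonnegative on $V$ is $k$-sos with respect to $V$ if there are polynomials $h_1,\dots,h_s$ with $\deg h_i\le k$ and $\ell(v)=\sum_i h_i(v)^2$ for all $v\in V$. The Theta rank $\mathrm{Th}(V)$ is the smallest $k\ge0$ such that every linear function nonnegative on $V$ is $k$-sos with respect to $V$. For $\ell$ nonnegative on $V$, $\{v\in V:\ell(v)=0\}$ is a face of $V$; inclusion-maximal faces different from $V$ are facets and the corresponding $\ell$ facet-defining. $V$ is $k$-level if every facet-defining linear function takes at most $k$ distinct values on $V$; the levelness $\mathrm{Lev}(V)$ is the smallest such $k$. *)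

theory Defs
  imports "HOL-Analysis.Analysis"
begin

definition mono_deg :: "('n::finite \<Rightarrow> nat) \<Rightarrow> nat" where
  "mono_deg \<alpha> = (\<Sum>i\<in>UNIV. \<alpha> i)"

definition poly_upto :: "nat \<Rightarrow> (real^'n::finite \<Rightarrow> real) \<Rightarrow> bool" where
  "poly_upto k h \<longleftrightarrow> (\<exists>A c. finite A \<and> (\<forall>\<alpha>\<in>A. mono_deg \<alpha> \<le> k) \<and>
      (\<forall>x. h x = (\<Sum>\<alpha>\<in>A. c \<alpha> * (\<Prod>i\<in>UNIV. (x$i) ^ (\<alpha> i)))))"

definition lin_fun :: "real \<Rightarrow> real^'n::finite \<Rightarrow> real^'n \<Rightarrow> real" where
  "lin_fun \<delta> c = (\<lambda>x. \<delta> - c \<bullet> x)"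

definition nonneg_on :: "(real^'n::finite) set \<Rightarrow> (real^'n \<Rightarrow> real) \<Rightarrow> bool" where
  "nonneg_on V l \<longleftrightarrow> (\<forall>v\<in>V. 0 \<le> l v)"

definition k_sos :: "nat \<Rightarrow> (real^'n::finite) set \<Rightarrow> (real^'n \<Rightarrow> real) \<Rightarrow> bool" where
  "k_sos k V l \<longleftrightarrow> (\<exists>hs. (\<forall>h\<in>set hs. poly_upto k h) \<and>
      (\<forall>v\<in>V. l v = (\<Sum>h\<leftarrow>hs. (h v)^2)))"

definition theta_rank :: "(real^'n::finite) set \<Rightarrow> nat" where
  "theta_rank V = (LEAST k. \<forall>\<delta> c. nonneg_on V (lin_fun \<delta> c) \<longrightarrow> k_sos k V (lin_fun \<delta> c))"

definition is_face :: "(real^'n::finite) set \<Rightarrow> (real^'n) set \<Rightarrow> bool" where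
  "is_face V F \<longleftrightarrow> (\<exists>\<delta> c. nonneg_on V (lin_fun \<delta> c) \<and> F = {v\<in>V. lin_fun \<delta> c v = 0})"

definition is_facet :: "(real^'n::finite) set \<Rightarrow> (real^'n) set \<Rightarrow> bool" where
  "is_facet V F \<longleftrightarrow> is_face V F \<and> F \<noteq> V \<and>
     (\<forall>G. is_face V G \<and> G \<noteq> V \<and> F \<subseteq> G \<longrightarrow> G = F)"

definition facet_defining :: "(real^'n::finite) set \<Rightarrow> real \<Rightarrow> real^'n \<Rightarrow> bool" where
  "facet_defining V \<delta> c \<longleftrightarrow> nonneg_on V (lin_fun \<delta> c) \<and>
     is_facet V {v\<in>V. lin_fun \<delta> c v = 0}"

definition k_level :: "(real^'n::finite) set \<Rightarrow> nat \<Rightarrow> bool" where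
  "k_level V k \<longleftrightarrow> (\<forall>\<delta> c. facet_defining V \<delta> c \<longrightarrow> card (lin_fun \<delta> c ` V) \<le> k)"

definition levelness :: "(real^'n::finite) set \<Rightarrow> nat" where
  "levelness V = (LEAST k. k_level V k)"

definition vec_join :: "real^'n::finite \<Rightarrow> real^'m::finite \<Rightarrow> real^('n + 'm)" where
  "vec_join x y = (\<chi> i. case i of Inl a \<Rightarrow> x$a | Inr b \<Rightarrow> y$b)"

definition prod_config :: "(real^'n::finite) set \<Rightarrow> (real^'m::finite) set \<Rightarrow> (real^('n + 'm)) set" where
  "prod_config V1 V2 = (\<lambda>(x,y). vec_join x y) ` (V1 \<times> V2)"

end

theory Submission
  imports Defs
begin

text \<open>A linear function on \<open>V1 \<times> V2\<close> splits as \<open>\<ell>1 x + \<ell>2 y\<close>; moving the minimum of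
  \<open>\<ell>1\<close> on \<open>V1\<close> into the constant term makes both summands nonnegative when \<open>\<ell>\<close> is, so
  \<open>k\<close>-sos certificates of \<open>\<ell>1\<close> and \<open>\<ell>2\<close> add up to one of \<open>\<ell>\<close>. Conversely, a certificate
  of a linear function of \<open>x\<close> alone on the product restricts to the slice \<open>V1 \<times> {q}\<close>.
  For levelness, the faces of the product are products of faces, hence its facets are
  \<open>F1 \<times> V2\<close> and \<open>V1 \<times> F2\<close> for facets \<open>Fi\<close> of the factors, and a facet-defining function
  of the product takes exactly the values of a facet-defining function of a factor.\<close>

lemma poly_upto_mono: "poly_upto k h \<Longrightarrow> k \<le> k' \<Longrightarrow> poly_upto k' h"
  unfolding poly_upto_def by (meson order_trans)

lemma poly_upto_monomial:
  fixes \<beta> :: "'n::finite \<Rightarrow> nat"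
  assumes "mono_deg \<beta> \<le> k"
  shows "poly_upto k (\<lambda>x::real^'n. a * (\<Prod>i\<in>UNIV. (x$i) ^ \<beta> i))"
  unfolding poly_upto_def
  by (rule exI[of _ "{\<beta>}"], rule exI[of _ "\<lambda>_. a"]) (use assms in auto)

lemma poly_upto_const: "poly_upto k (\<lambda>x::real^'n::finite. a)"
  using poly_upto_monomial[of "\<lambda>_::'n. 0" k a] by (simp add: mono_deg_def)

lemma poly_upto_coord: "poly_upto 1 (\<lambda>x::real^'n::finite. x$i)"
proof -
  have "mono_deg (\<lambda>j::'n. if j = i then 1 else 0) \<le> 1" by (simp add: mono_deg_def)
  from poly_upto_monomial[OF this, of 1] show ?thesis
    by (simp add: if_distrib[of "\<lambda>e. _ ^ e"] prod.delta cong: if_cong)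
qed

lemma poly_upto_add:
  assumes "poly_upto k f" "poly_upto k g"
  shows "poly_upto k (\<lambda>x. f x + g x)"
proof -
  obtain A a where A: "finite A" "\<forall>\<alpha>\<in>A. mono_deg \<alpha> \<le> k"
    "\<And>x. f x = (\<Sum>\<alpha>\<in>A. a \<alpha> * (\<Prod>i\<in>UNIV. (x$i) ^ \<alpha> i))"
    using assms(1) unfolding poly_upto_def by blast
  obtain B b where B: "finite B" "\<forall>\<alpha>\<in>B. mono_deg \<alpha> \<le> k"
    "\<And>x. g x = (\<Sum>\<alpha>\<in>B. b \<alpha> * (\<Prod>i\<in>UNIV. (x$i) ^ \<alpha> i))"
    using assms(2) unfolding poly_upto_def by blast
  let ?a = "\<lambda>\<alpha>. if \<alpha> \<in> A then a \<alpha> else 0" and ?b = "\<lambda>\<alpha>. if \<alpha> \<in> B then b \<alpha> else 0"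
  have "f x + g x = (\<Sum>\<alpha>\<in>A \<union> B. (?a \<alpha> + ?b \<alpha>) * (\<Prod>i\<in>UNIV. (x$i) ^ \<alpha> i))" for x
    using A(1) B(1)
    by (simp add: A(3) B(3) algebra_simps sum.distrib if_distrib[of "\<lambda>c. c * _"]
        sum.If_cases Int_absorb1 Int_absorb2)
  then show ?thesis
    unfolding poly_upto_def using A(1,2) B(1,2)
    by (intro exI[of _ "A \<union> B"] exI[of _ "\<lambda>\<alpha>. ?a \<alpha> + ?b \<alpha>"]) auto
qed

lemma poly_upto_sum:
  assumes "finite S" "\<And>s. s \<in> S \<Longrightarrow> poly_upto k (f s)"
  shows "poly_upto k (\<lambda>x. \<Sum>s\<in>S. f s x)"
  using assms by (induction S rule: finite_induct) (auto intro: poly_upto_const poly_upto_add)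

lemma poly_upto_mult:
  assumes "poly_upto k f" "poly_upto j g"
  shows "poly_upto (k + j) (\<lambda>x. f x * g x)"
proof -
  obtain A a where A: "finite A" "\<forall>\<alpha>\<in>A. mono_deg \<alpha> \<le> k"
    "\<And>x. f x = (\<Sum>\<alpha>\<in>A. a \<alpha> * (\<Prod>i\<in>UNIV. (x$i) ^ \<alpha> i))"
    using assms(1) unfolding poly_upto_def by blast
  obtain B b where B: "finite B" "\<forall>\<beta>\<in>B. mono_deg \<beta> \<le> j"
    "\<And>x. g x = (\<Sum>\<beta>\<in>B. b \<beta> * (\<Prod>i\<in>UNIV. (x$i) ^ \<beta> i))"
    using assms(2) unfolding poly_upto_def by blast
  have "f x * g x = (\<Sum>\<alpha>\<in>A. \<Sum>\<beta>\<in>B. (a \<alpha> * b \<beta>) * (\<Prod>i\<in>UNIV. (x$i) ^ (\<alpha> i + \<beta> i)))" for x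
    unfolding A(3) B(3) sum_product by (simp add: power_add prod.distrib mult_ac)
  moreover have "mono_deg (\<lambda>i. \<alpha> i + \<beta> i) \<le> k + j" if "\<alpha> \<in> A" "\<beta> \<in> B" for \<alpha> \<beta>
    using that A(2) B(2) by (auto simp: mono_deg_def sum.distrib intro: add_mono)
  ultimately show ?thesis
    using A(1) B(1) by (auto intro!: poly_upto_sum poly_upto_monomial)
qed

lemma poly_upto_cmult: "poly_upto k h \<Longrightarrow> poly_upto k (\<lambda>x. a * h x)"
  using poly_upto_mult[OF poly_upto_const[of 0 a], of k h] by simp

lemma poly_upto_prod:
  assumes "finite I" "\<And>i. i \<in> I \<Longrightarrow> poly_upto (d i) (f i)"
  shows "poly_upto (\<Sum>i\<in>I. d i) (\<lambda>x. \<Prod>i\<in>I. f i x)"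
  using assms by (induction I rule: finite_induct) (auto intro: poly_upto_const poly_upto_mult)

lemma poly_upto_power: "poly_upto k f \<Longrightarrow> poly_upto (n * k) (\<lambda>x. f x ^ n)"
  by (induction n) (auto intro: poly_upto_const poly_upto_mult)

lemma poly_upto_compose:
  fixes g :: "real^'m::finite \<Rightarrow> real^'n::finite"
  assumes "poly_upto k h" "\<And>i. poly_upto j (\<lambda>x. g x $ i)"
  shows "poly_upto (k * j) (\<lambda>x. h (g x))"
proof -
  obtain A a where A: "finite A" "\<forall>\<alpha>\<in>A. mono_deg \<alpha> \<le> k"
    "\<And>x. h x = (\<Sum>\<alpha>\<in>A. a \<alpha> * (\<Prod>i\<in>UNIV. (x$i) ^ \<alpha> i))"
    using assms(1) unfolding poly_upto_def by blast
  have "poly_upto (k * j) (\<lambda>x. a \<alpha> * (\<Prod>i\<in>UNIV. (g x $ i) ^ \<alpha> i))" if "\<alpha> \<in> A" for \<alpha>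
  proof -
    have "poly_upto (\<Sum>i\<in>UNIV. \<alpha> i * j) (\<lambda>x. \<Prod>i\<in>UNIV. (g x $ i) ^ \<alpha> i)"
      by (intro poly_upto_prod poly_upto_power assms(2)) simp
    moreover have "(\<Sum>i\<in>UNIV. \<alpha> i * j) \<le> k * j"
      using A(2) that by (simp add: mono_deg_def flip: sum_distrib_right)
    ultimately show ?thesis using poly_upto_cmult poly_upto_mono by blast
  qed
  then show ?thesis unfolding A(3) by (intro poly_upto_sum A(1))
qed

lemma exists_poly_separating_point:
  fixes W :: "(real^'n::finite) set"
  assumes "finite W" "w \<notin> W"
  shows "\<exists>q. poly_upto (card W) q \<and> q w = 1 \<and> (\<forall>u\<in>W. q u = 0)"
  using assms
proof (induction W rule: finite_induct)
  case empty
  then show ?case using poly_upto_const[of 0 1] by auto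
next
  case (insert u W)
  then obtain q where q: "poly_upto (card W) q" "q w = 1" "\<forall>u\<in>W. q u = 0" by auto
  from insert obtain i where i: "w$i \<noteq> u$i" by (auto simp: vec_eq_iff)
  define r where "r x = (x$i - u$i) / (w$i - u$i)" for x :: "real^'n"
  have "r = (\<lambda>x. inverse (w$i - u$i) * x$i + (- u$i / (w$i - u$i)))"
    by (simp add: r_def fun_eq_iff divide_inverse algebra_simps)
  moreover have "poly_upto 1 (\<lambda>x::real^'n. inverse (w$i - u$i) * x$i + (- u$i / (w$i - u$i)))"
    by (intro poly_upto_add poly_upto_cmult poly_upto_coord poly_upto_const)
  ultimately have "poly_upto 1 r" by simp
  then have "poly_upto (card W + 1) (\<lambda>x. q x * r x)" by (rule poly_upto_mult[OF q(1)])
  moreover have "r w = 1" "r u = 0" using i by (simp_all add: r_def)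
  ultimately show ?case using insert q by (auto intro!: exI[of _ "\<lambda>x. q x * r x"])
qed

lemma exists_poly_interpolating:
  fixes V :: "(real^'n::finite) set"
  assumes "finite V"
  shows "\<exists>h. poly_upto (card V) h \<and> (\<forall>v\<in>V. h v = f v)"
proof -
  have "\<exists>q. poly_upto (card V) q \<and> q v = 1 \<and> (\<forall>u\<in>V-{v}. q u = 0)" if "v \<in> V" for v
  proof -
    obtain q where "poly_upto (card (V-{v})) q" "q v = 1" "\<forall>u\<in>V-{v}. q u = 0"
      using exists_poly_separating_point[of "V-{v}" v] assms by auto
    moreover have "card (V-{v}) \<le> card V" using assms by (simp add: card_mono)
    ultimately show ?thesis using poly_upto_mono by blast
  qed
  then obtain Q where Q: "\<And>v. v \<in> V \<Longrightarrow> poly_upto (card V) (Q v) \<and> Q v v = 1 \<and> (\<forall>u\<in>V-{v}. Q v u = 0)"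
    by metis
  define h where "h x = (\<Sum>u\<in>V. f u * Q u x)" for x
  have "poly_upto (card V) h"
    unfolding h_def[abs_def] using Q by (intro poly_upto_sum assms poly_upto_cmult) auto
  moreover have "h v = f v" if "v \<in> V" for v
  proof -
    have "h v = f v * Q v v + (\<Sum>u\<in>V-{v}. f u * Q u v)"
      unfolding h_def using assms that by (simp add: sum.remove)
    also have "(\<Sum>u\<in>V-{v}. f u * Q u v) = 0" using Q that by (intro sum.neutral) auto
    finally show ?thesis using Q that by simp
  qed
  ultimately show ?thesis by blast
qed

lemma k_sos_mono: "k_sos k V l \<Longrightarrow> k \<le> k' \<Longrightarrow> k_sos k' V l"
  unfolding k_sos_def by (meson poly_upto_mono)

lemma k_sos_cong: "(\<And>v. v \<in> V \<Longrightarrow> l v = l' v) \<Longrightarrow> k_sos k V l \<longleftrightarrow> k_sos k V l'"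
  unfolding k_sos_def by simp

lemma k_sos_add:
  assumes "k_sos k V f" "k_sos k V g"
  shows "k_sos k V (\<lambda>x. f x + g x)"
proof -
  obtain fs gs where "\<forall>h\<in>set fs. poly_upto k h" "\<forall>v\<in>V. f v = (\<Sum>h\<leftarrow>fs. (h v)^2)"
    "\<forall>h\<in>set gs. poly_upto k h" "\<forall>v\<in>V. g v = (\<Sum>h\<leftarrow>gs. (h v)^2)"
    using assms unfolding k_sos_def by blast
  then show ?thesis
    unfolding k_sos_def by (intro exI[of _ "fs @ gs"]) auto
qed

lemma k_sos_card:
  assumes "finite V" "nonneg_on V l"
  shows "k_sos (card V) V l"
proof -
  obtain h where "poly_upto (card V) h" "\<forall>v\<in>V. h v = sqrt (l v)"
    using exists_poly_interpolating[OF assms(1), of "\<lambda>v. sqrt (l v)"] by blast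
  then show ?thesis
    using assms(2) unfolding k_sos_def nonneg_on_def by (intro exI[of _ "[h]"]) auto
qed

lemma k_sos_pullback:
  fixes g :: "real^'m::finite \<Rightarrow> real^'n::finite"
  assumes "k_sos k W l" "\<And>i. poly_upto 1 (\<lambda>x. g x $ i)"
    and "\<And>v. v \<in> V \<Longrightarrow> g v \<in> W \<and> l' v = l (g v)"
  shows "k_sos k V l'"
proof -
  obtain hs where hs: "\<forall>h\<in>set hs. poly_upto k h" "\<forall>w\<in>W. l w = (\<Sum>h\<leftarrow>hs. (h w)^2)"
    using assms(1) unfolding k_sos_def by blast
  have "\<forall>h\<in>set hs. poly_upto k (\<lambda>x. h (g x))"
    using hs(1) poly_upto_compose[OF _ assms(2), of k] by simp
  moreover have "\<forall>v\<in>V. l' v = (\<Sum>h\<leftarrow>map (\<lambda>h x. h (g x)) hs. (h v)^2)"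
    using assms(3) hs(2) by (simp add: o_def)
  ultimately show ?thesis
    unfolding k_sos_def by (intro exI[of _ "map (\<lambda>h x. h (g x)) hs"]) auto
qed

definition theta_exact :: "(real^'n::finite) set \<Rightarrow> nat \<Rightarrow> bool" where
  "theta_exact V k \<longleftrightarrow> (\<forall>\<delta> c. nonneg_on V (lin_fun \<delta> c) \<longrightarrow> k_sos k V (lin_fun \<delta> c))"

lemma theta_rank_eq_Least: "theta_rank V = Least (theta_exact V)"
  unfolding theta_rank_def theta_exact_def ..

lemma mono_theta_exact: "mono (theta_exact V)"
  unfolding theta_exact_def by (intro monoI le_boolI) (meson k_sos_mono)

lemma theta_exact_card: "finite V \<Longrightarrow> theta_exact V (card V)"
  unfolding theta_exact_def by (simp add: k_sos_card)

lemma Least_conj_eq_max: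
  fixes A B :: "nat \<Rightarrow> bool"
  assumes "mono A" "mono B" "A a" "B b"
  shows "(LEAST k. A k \<and> B k) = max (Least A) (Least B)"
proof (rule Least_equality)
  have "A (Least A)" "B (Least B)" using assms by (auto intro: LeastI)
  then show "A (max (Least A) (Least B)) \<and> B (max (Least A) (Least B))"
    using assms(1,2) by (meson le_boolD max.cobounded1 max.cobounded2 monoD)
next
  show "A k \<and> B k \<Longrightarrow> max (Least A) (Least B) \<le> k" for k
    by (simp add: Least_le)
qed

definition vec_fst :: "real^('n::finite + 'm::finite) \<Rightarrow> real^'n" where
  "vec_fst z = (\<chi> a. z $ Inl a)"

definition vec_snd :: "real^('n::finite + 'm::finite) \<Rightarrow> real^'m" where
  "vec_snd z = (\<chi> b. z $ Inr b)"

lemma vec_join_nth [simp]: "vec_join x y $ Inl a = x $ a" "vec_join x y $ Inr b = y $ b"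
  by (simp_all add: vec_join_def)

lemma vec_fst_join [simp]: "vec_fst (vec_join x y) = x"
  and vec_snd_join [simp]: "vec_snd (vec_join x y) = y"
  by (simp_all add: vec_fst_def vec_snd_def vec_eq_iff)

lemma vec_join_fst_snd [simp]: "vec_join (vec_fst z) (vec_snd z) = z"
  by (simp add: vec_eq_iff vec_fst_def vec_snd_def vec_join_def split: sum.split)

lemma vec_join_eq_iff [simp]: "vec_join x y = vec_join x' y' \<longleftrightarrow> x = x' \<and> y = y'"
  by (metis vec_fst_join vec_snd_join)

lemma inner_vec_join: "vec_join a b \<bullet> vec_join x y = a \<bullet> x + b \<bullet> y"
  using sum.Plus[of UNIV UNIV "\<lambda>i. vec_join a b $ i * vec_join x y $ i"]
  by (simp add: inner_vec_def o_def)

lemma lin_fun_vec_join: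
  "lin_fun \<delta> c (vec_join x y) = lin_fun \<delta>1 (vec_fst c) x + lin_fun (\<delta> - \<delta>1) (vec_snd c) y"
  using inner_vec_join[of "vec_fst c" "vec_snd c" x y] by (simp add: lin_fun_def)

lemma lin_fun_vec_join_left: "lin_fun \<delta> (vec_join c 0) (vec_join x y) = lin_fun \<delta> c x"
  by (simp add: lin_fun_def inner_vec_join)

lemma lin_fun_vec_join_right: "lin_fun \<delta> (vec_join 0 c) (vec_join x y) = lin_fun \<delta> c y"
  by (simp add: lin_fun_def inner_vec_join)

lemma poly_upto_vec_fst: "poly_upto 1 (\<lambda>z. vec_fst z $ a)"
  and poly_upto_vec_snd: "poly_upto 1 (\<lambda>z. vec_snd z $ b)"
  by (simp_all add: vec_fst_def vec_snd_def poly_upto_coord[simplified])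

lemma poly_upto_vec_join_left: "poly_upto 1 (\<lambda>x. vec_join x p $ i)"
  by (cases i) (simp_all add: poly_upto_coord[simplified] poly_upto_const)

lemma poly_upto_vec_join_right: "poly_upto 1 (\<lambda>y. vec_join p y $ i)"
  by (cases i) (simp_all add: poly_upto_coord[simplified] poly_upto_const)

lemma vec_join_in_prod_config [simp]: "vec_join x y \<in> prod_config V1 V2 \<longleftrightarrow> x \<in> V1 \<and> y \<in> V2"
  by (auto simp: prod_config_def)

lemma prod_config_cases:
  "z \<in> prod_config V1 V2 \<Longrightarrow> (\<And>x y. x \<in> V1 \<Longrightarrow> y \<in> V2 \<Longrightarrow> z = vec_join x y \<Longrightarrow> P) \<Longrightarrow> P"
  by (auto simp: prod_config_def)

lemma finite_prod_config: "finite V1 \<Longrightarrow> finite V2 \<Longrightarrow> finite (prod_config V1 V2)"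
  by (simp add: prod_config_def)

lemma prod_config_eq_empty_iff [simp]: "prod_config A B = {} \<longleftrightarrow> A = {} \<or> B = {}"
  by (auto simp: prod_config_def)

lemma prod_config_mono: "A \<subseteq> C \<Longrightarrow> B \<subseteq> D \<Longrightarrow> prod_config A B \<subseteq> prod_config C D"
  by (auto simp: prod_config_def)

lemma prod_config_subset_iff:
  assumes "A \<noteq> {}" "B \<noteq> {}"
  shows "prod_config A B \<subseteq> prod_config C D \<longleftrightarrow> A \<subseteq> C \<and> B \<subseteq> D"
proof
  assume sub: "prod_config A B \<subseteq> prod_config C D"
  obtain a b where "a \<in> A" "b \<in> B" using assms by auto
  then show "A \<subseteq> C \<and> B \<subseteq> D"
    using subsetD[OF sub, of "vec_join _ b"] subsetD[OF sub, of "vec_join a _"] by auto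
qed (simp add: prod_config_mono)

lemma prod_config_eq_iff:
  assumes "A \<noteq> {}" "B \<noteq> {}"
  shows "prod_config A B = prod_config C D \<longleftrightarrow> A = C \<and> B = D"
proof
  assume eq: "prod_config A B = prod_config C D"
  then have "C \<noteq> {}" "D \<noteq> {}" using assms by (metis prod_config_eq_empty_iff)+
  then show "A = C \<and> B = D"
    using eq prod_config_subset_iff assms by (metis order.eq_iff)
qed simp

lemma image_prod_config_left:
  "V2 \<noteq> {} \<Longrightarrow> (\<And>x y. x \<in> V1 \<Longrightarrow> y \<in> V2 \<Longrightarrow> f (vec_join x y) = g x) \<Longrightarrow> f ` prod_config V1 V2 = g ` V1"
  by (force simp: prod_config_def image_iff)

lemma image_prod_config_right:
  "V1 \<noteq> {} \<Longrightarrow> (\<And>x y. x \<in> V1 \<Longrightarrow> y \<in> V2 \<Longrightarrow> f (vec_join x y) = g y) \<Longrightarrow> f ` prod_config V1 V2 = g ` V2"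
  by (force simp: prod_config_def image_iff)

lemma nonneg_on_prod_config_split:
  assumes "finite V1" "V1 \<noteq> {}" "nonneg_on (prod_config V1 V2) (lin_fun \<delta> c)"
  obtains \<delta>1 where "nonneg_on V1 (lin_fun \<delta>1 (vec_fst c))" "nonneg_on V2 (lin_fun (\<delta> - \<delta>1) (vec_snd c))"
proof
  define \<delta>1 where "\<delta>1 = Max ((\<bullet>) (vec_fst c) ` V1)"
  show "nonneg_on V1 (lin_fun \<delta>1 (vec_fst c))"
    using assms(1) unfolding nonneg_on_def lin_fun_def \<delta>1_def by simp
  have "\<delta>1 \<in> (\<bullet>) (vec_fst c) ` V1"
    unfolding \<delta>1_def using assms(1,2) by (intro Max_in) auto
  then obtain x0 where x0: "x0 \<in> V1" "vec_fst c \<bullet> x0 = \<delta>1" by blast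
  show "nonneg_on V2 (lin_fun (\<delta> - \<delta>1) (vec_snd c))"
    unfolding nonneg_on_def
  proof
    fix y assume "y \<in> V2"
    then have "0 \<le> lin_fun \<delta> c (vec_join x0 y)" using assms(3) x0 by (simp add: nonneg_on_def)
    then show "0 \<le> lin_fun (\<delta> - \<delta>1) (vec_snd c) y"
      using lin_fun_vec_join[of \<delta> c x0 y \<delta>1] x0 by (simp add: lin_fun_def)
  qed
qed

lemma nonneg_on_prod_config_left:
  "nonneg_on V1 (lin_fun \<delta> c) \<Longrightarrow> nonneg_on (prod_config V1 V2) (lin_fun \<delta> (vec_join c 0))"
  by (auto simp: nonneg_on_def lin_fun_vec_join_left elim: prod_config_cases)

lemma nonneg_on_prod_config_right:
  "nonneg_on V2 (lin_fun \<delta> c) \<Longrightarrow> nonneg_on (prod_config V1 V2) (lin_fun \<delta> (vec_join 0 c))"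
  by (auto simp: nonneg_on_def lin_fun_vec_join_right elim: prod_config_cases)

lemma theta_exact_prod_config_iff:
  assumes "finite V1" "V1 \<noteq> {}" "V2 \<noteq> {}"
  shows "theta_exact (prod_config V1 V2) k \<longleftrightarrow> theta_exact V1 k \<and> theta_exact V2 k"
proof safe
  assume T: "theta_exact (prod_config V1 V2) k"
  obtain p q where "p \<in> V1" "q \<in> V2" using assms by auto
  show "theta_exact V1 k" unfolding theta_exact_def
  proof (intro allI impI)
    fix \<delta> c assume "nonneg_on V1 (lin_fun \<delta> c)"
    then have "k_sos k (prod_config V1 V2) (lin_fun \<delta> (vec_join c 0))"
      using T nonneg_on_prod_config_left unfolding theta_exact_def by blast
    then show "k_sos k V1 (lin_fun \<delta> c)"
      by (rule k_sos_pullback[OF _ poly_upto_vec_join_left[of q]])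
        (simp add: lin_fun_vec_join_left \<open>q \<in> V2\<close>)
  qed
  show "theta_exact V2 k" unfolding theta_exact_def
  proof (intro allI impI)
    fix \<delta> c assume "nonneg_on V2 (lin_fun \<delta> c)"
    then have "k_sos k (prod_config V1 V2) (lin_fun \<delta> (vec_join 0 c))"
      using T nonneg_on_prod_config_right unfolding theta_exact_def by blast
    then show "k_sos k V2 (lin_fun \<delta> c)"
      by (rule k_sos_pullback[OF _ poly_upto_vec_join_right[of p]])
        (simp add: lin_fun_vec_join_right \<open>p \<in> V1\<close>)
  qed
next
  assume T1: "theta_exact V1 k" and T2: "theta_exact V2 k"
  show "theta_exact (prod_config V1 V2) k" unfolding theta_exact_def
  proof (intro allI impI)
    fix \<delta> c assume "nonneg_on (prod_config V1 V2) (lin_fun \<delta> c)"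
    then obtain \<delta>1 where
      "nonneg_on V1 (lin_fun \<delta>1 (vec_fst c))" "nonneg_on V2 (lin_fun (\<delta> - \<delta>1) (vec_snd c))"
      using nonneg_on_prod_config_split assms(1,2) by blast
    then have "k_sos k V1 (lin_fun \<delta>1 (vec_fst c))" "k_sos k V2 (lin_fun (\<delta> - \<delta>1) (vec_snd c))"
      using T1 T2 unfolding theta_exact_def by blast+
    then have "k_sos k (prod_config V1 V2) (\<lambda>z. lin_fun \<delta>1 (vec_fst c) (vec_fst z)
        + lin_fun (\<delta> - \<delta>1) (vec_snd c) (vec_snd z))"
      by (intro k_sos_add k_sos_pullback[OF _ poly_upto_vec_fst] k_sos_pullback[OF _ poly_upto_vec_snd])
        (auto elim: prod_config_cases)
    then show "k_sos k (prod_config V1 V2) (lin_fun \<delta> c)"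
      by (rule k_sos_cong[THEN iffD1, rotated]) (metis lin_fun_vec_join vec_join_fst_snd)
  qed
qed

lemma face_subset: "is_face V F \<Longrightarrow> F \<subseteq> V"
  unfolding is_face_def by auto

lemma is_face_empty: "is_face V {}"
  unfolding is_face_def
  by (intro exI[of _ 1] exI[of _ 0]) (auto simp: nonneg_on_def lin_fun_def)

lemma exists_facet:
  assumes "finite V" "V \<noteq> {}"
  shows "\<exists>F. is_facet V F"
proof -
  let ?S = "{F. is_face V F \<and> F \<noteq> V}"
  have "card F < Suc (card V)" if "F \<in> ?S" for F
    using that face_subset[of V F] card_mono[OF assms(1), of F] by simp
  then obtain F where F: "F \<in> ?S" "\<And>G. G \<in> ?S \<Longrightarrow> card G \<le> card F"
    using ex_has_greatest_nat[of "\<lambda>F. F \<in> ?S" "{}" card "Suc (card V)"] is_face_empty assms(2)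
    by auto
  have "G = F" if "is_face V G" "G \<noteq> V" "F \<subseteq> G" for G
  proof -
    have "finite G" using that(1) face_subset assms(1) finite_subset by blast
    then show ?thesis using F(2) that card_seteq by blast
  qed
  then show ?thesis using F(1) unfolding is_facet_def by blast
qed

text \<open>With at least two points, some coordinate is non-constant on \<open>V\<close>, and its maximum
  cuts out a proper nonempty face, so \<open>{}\<close> is not maximal.\<close>
lemma empty_facet_imp_singleton:
  assumes "finite V" "is_facet V {}"
  shows "\<exists>v. V = {v}"
proof (rule ccontr)
  assume not_singleton: "\<nexists>v. V = {v}"
  have "V \<noteq> {}" using assms(2) unfolding is_facet_def by auto
  then obtain u w where uw: "u \<in> V" "w \<in> V" "u \<noteq> w" using not_singleton by blast
  then obtain i where i: "u$i \<noteq> w$i" by (auto simp: vec_eq_iff)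
  define c :: "real^'a" where "c = axis i 1"
  have ci: "c \<bullet> x = x$i" for x
    by (simp add: c_def inner_axis')
  define M where "M = Max ((\<lambda>x. x$i) ` V)"
  let ?G = "{v\<in>V. lin_fun M c v = 0}"
  have "nonneg_on V (lin_fun M c)"
    unfolding nonneg_on_def lin_fun_def ci M_def using assms(1) by simp
  then have "is_face V ?G" unfolding is_face_def by blast
  moreover have "?G \<noteq> {}"
  proof -
    have "M \<in> (\<lambda>x. x$i) ` V" unfolding M_def using assms(1) \<open>V \<noteq> {}\<close> by (intro Max_in) auto
    then show ?thesis by (auto simp: lin_fun_def ci)
  qed
  moreover have "?G \<noteq> V"
  proof
    assume "?G = V"
    then have "u \<in> ?G" "w \<in> ?G" using uw by auto
    then show False using i by (simp add: lin_fun_def ci)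
  qed
  ultimately show False using assms(2) unfolding is_facet_def by blast
qed

lemma k_level_ge_1:
  assumes "finite V" "V \<noteq> {}" "k_level V k"
  shows "1 \<le> k"
proof -
  obtain F where "is_facet V F" using exists_facet assms(1,2) by blast
  then obtain \<delta> c where "facet_defining V \<delta> c"
    unfolding facet_defining_def is_facet_def is_face_def by blast
  then have "card (lin_fun \<delta> c ` V) \<le> k" using assms(3) unfolding k_level_def by blast
  moreover have "card (lin_fun \<delta> c ` V) \<ge> 1" using assms(1,2) by (simp add: Suc_leI card_gt_0_iff)
  ultimately show ?thesis by simp
qed

lemma mono_k_level: "mono (k_level V)"
  unfolding k_level_def by (intro monoI le_boolI) (meson order_trans)

lemma k_level_card: "finite V \<Longrightarrow> k_level V (card V)"
  unfolding k_level_def by (simp add: card_image_le)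

lemma zero_set_prod_config:
  assumes "nonneg_on V1 f" "nonneg_on V2 g"
    and "\<And>x y. x \<in> V1 \<Longrightarrow> y \<in> V2 \<Longrightarrow> l (vec_join x y) = f x + g y"
  shows "{z \<in> prod_config V1 V2. l z = 0} = prod_config {x \<in> V1. f x = 0} {y \<in> V2. g y = 0}"
proof -
  have "l (vec_join x y) = 0 \<longleftrightarrow> f x = 0 \<and> g y = 0" if "x \<in> V1" "y \<in> V2" for x y
    using assms that unfolding nonneg_on_def by (metis add_nonneg_eq_0_iff)
  then show ?thesis by (auto elim!: prod_config_cases)
qed

lemma zero_set_prod_config_left:
  "{z \<in> prod_config V1 V2. lin_fun \<delta> (vec_join c 0) z = 0} = prod_config {x \<in> V1. lin_fun \<delta> c x = 0} V2"
  by (auto simp: lin_fun_vec_join_left elim!: prod_config_cases)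

lemma zero_set_prod_config_right:
  "{z \<in> prod_config V1 V2. lin_fun \<delta> (vec_join 0 c) z = 0} = prod_config V1 {y \<in> V2. lin_fun \<delta> c y = 0}"
  by (auto simp: lin_fun_vec_join_right elim!: prod_config_cases)

lemma is_face_prod_config_left: "is_face V1 G \<Longrightarrow> is_face (prod_config V1 V2) (prod_config G V2)"
  unfolding is_face_def using nonneg_on_prod_config_left zero_set_prod_config_left by blast

lemma is_face_prod_config_right: "is_face V2 G \<Longrightarrow> is_face (prod_config V1 V2) (prod_config V1 G)"
  unfolding is_face_def using nonneg_on_prod_config_right zero_set_prod_config_right by blast

lemma face_of_prod_config:
  assumes "finite V1" "V1 \<noteq> {}" "is_face (prod_config V1 V2) G"
  obtains G1 G2 where "is_face V1 G1" "is_face V2 G2" "G = prod_config G1 G2"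
proof -
  obtain \<delta> c where nn: "nonneg_on (prod_config V1 V2) (lin_fun \<delta> c)"
    and G: "G = {z \<in> prod_config V1 V2. lin_fun \<delta> c z = 0}"
    using assms(3) unfolding is_face_def by blast
  obtain \<delta>1 where nn1: "nonneg_on V1 (lin_fun \<delta>1 (vec_fst c))"
    and nn2: "nonneg_on V2 (lin_fun (\<delta> - \<delta>1) (vec_snd c))"
    using nonneg_on_prod_config_split[OF assms(1,2) nn] .
  have "G = prod_config {x \<in> V1. lin_fun \<delta>1 (vec_fst c) x = 0} {y \<in> V2. lin_fun (\<delta> - \<delta>1) (vec_snd c) y = 0}"
    unfolding G by (rule zero_set_prod_config[OF nn1 nn2 lin_fun_vec_join])
  with nn1 nn2 show ?thesis
    using that unfolding is_face_def by blast
qed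

lemma is_facet_prod_config_left_iff:
  assumes "finite V1" "F \<noteq> {}" "V2 \<noteq> {}"
  shows "is_facet (prod_config V1 V2) (prod_config F V2) \<longleftrightarrow> is_facet V1 F"
proof
  assume facet: "is_facet (prod_config V1 V2) (prod_config F V2)"
  then have face: "is_face (prod_config V1 V2) (prod_config F V2)" unfolding is_facet_def by blast
  then have "F \<subseteq> V1" using face_subset prod_config_subset_iff[OF assms(2,3)] by blast
  then have "V1 \<noteq> {}" using assms(2) by blast
  obtain G1 G2 where "is_face V1 G1" "prod_config F V2 = prod_config G1 G2"
    using face_of_prod_config[OF assms(1) \<open>V1 \<noteq> {}\<close> face] .
  then have "is_face V1 F" using prod_config_eq_iff[OF assms(2,3)] by simp
  moreover have "F \<noteq> V1" using facet unfolding is_facet_def by blast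
  moreover have "G = F" if "is_face V1 G" "G \<noteq> V1" "F \<subseteq> G" for G
  proof -
    have "G \<noteq> {}" using that(3) assms(2) by blast
    then have "prod_config G V2 \<noteq> prod_config V1 V2"
      using that(2) prod_config_eq_iff[OF \<open>G \<noteq> {}\<close> assms(3)] by simp
    moreover have "prod_config F V2 \<subseteq> prod_config G V2" using that(3) by (rule prod_config_mono) simp
    ultimately have "prod_config G V2 = prod_config F V2"
      using facet is_face_prod_config_left[OF that(1)] unfolding is_facet_def by blast
    then show "G = F" using prod_config_eq_iff[OF \<open>G \<noteq> {}\<close> assms(3)] by blast
  qed
  ultimately show "is_facet V1 F" unfolding is_facet_def by blast
next
  assume facet: "is_facet V1 F"
  then have F: "is_face V1 F" "F \<noteq> V1" unfolding is_facet_def by blast+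
  then have "V1 \<noteq> {}" using assms(2) face_subset[of V1 F] by blast
  have "G = prod_config F V2"
    if G_face: "is_face (prod_config V1 V2) G" and "G \<noteq> prod_config V1 V2" "prod_config F V2 \<subseteq> G" for G
  proof -
    obtain G1 G2 where G: "is_face V1 G1" "is_face V2 G2" "G = prod_config G1 G2"
      using face_of_prod_config[OF assms(1) \<open>V1 \<noteq> {}\<close> G_face] .
    then have "F \<subseteq> G1" "V2 \<subseteq> G2" using that(3) prod_config_subset_iff[OF assms(2,3)] by auto
    then have "G2 = V2" using face_subset[OF G(2)] by blast
    then have "G1 \<noteq> V1" using that(2) G(3) by blast
    then have "G1 = F" using facet G(1) \<open>F \<subseteq> G1\<close> unfolding is_facet_def by blast
    then show ?thesis using G(3) \<open>G2 = V2\<close> by simp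
  qed
  moreover have "prod_config F V2 \<noteq> prod_config V1 V2"
    using F(2) prod_config_eq_iff[OF assms(2,3)] by simp
  ultimately show "is_facet (prod_config V1 V2) (prod_config F V2)"
    using is_face_prod_config_left[OF F(1)] unfolding is_facet_def by blast
qed

lemma is_facet_prod_config_right_iff:
  assumes "finite V1" "V1 \<noteq> {}" "F \<noteq> {}"
  shows "is_facet (prod_config V1 V2) (prod_config V1 F) \<longleftrightarrow> is_facet V2 F"
proof
  assume facet: "is_facet (prod_config V1 V2) (prod_config V1 F)"
  then have face: "is_face (prod_config V1 V2) (prod_config V1 F)" unfolding is_facet_def by blast
  obtain G1 G2 where "is_face V2 G2" "prod_config V1 F = prod_config G1 G2"
    using face_of_prod_config[OF assms(1,2) face] .
  then have "is_face V2 F" using prod_config_eq_iff[OF assms(2,3)] by simp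
  moreover have "F \<noteq> V2" using facet unfolding is_facet_def by blast
  moreover have "G = F" if "is_face V2 G" "G \<noteq> V2" "F \<subseteq> G" for G
  proof -
    have "G \<noteq> {}" using that(3) assms(3) by blast
    then have "prod_config V1 G \<noteq> prod_config V1 V2"
      using that(2) prod_config_eq_iff[OF assms(2) \<open>G \<noteq> {}\<close>] by simp
    moreover have "prod_config V1 F \<subseteq> prod_config V1 G" using that(3) by (rule prod_config_mono[rotated]) simp
    ultimately have "prod_config V1 G = prod_config V1 F"
      using facet is_face_prod_config_right[OF that(1)] unfolding is_facet_def by blast
    then show "G = F" using prod_config_eq_iff[OF assms(2) \<open>G \<noteq> {}\<close>] by blast
  qed
  ultimately show "is_facet V2 F" unfolding is_facet_def by blast
next
  assume facet: "is_facet V2 F"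
  then have F: "is_face V2 F" "F \<noteq> V2" unfolding is_facet_def by blast+
  have "G = prod_config V1 F"
    if G_face: "is_face (prod_config V1 V2) G" and "G \<noteq> prod_config V1 V2" "prod_config V1 F \<subseteq> G" for G
  proof -
    obtain G1 G2 where G: "is_face V1 G1" "is_face V2 G2" "G = prod_config G1 G2"
      using face_of_prod_config[OF assms(1,2) G_face] .
    then have "V1 \<subseteq> G1" "F \<subseteq> G2" using that(3) prod_config_subset_iff[OF assms(2,3)] by auto
    then have "G1 = V1" using face_subset[OF G(1)] by blast
    then have "G2 \<noteq> V2" using that(2) G(3) by blast
    then have "G2 = F" using facet G(2) \<open>F \<subseteq> G2\<close> unfolding is_facet_def by blast
    then show ?thesis using G(3) \<open>G1 = V1\<close> by simp
  qed
  moreover have "prod_config V1 F \<noteq> prod_config V1 V2"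
    using F(2) prod_config_eq_iff[OF assms(2,3)] by simp
  ultimately show "is_facet (prod_config V1 V2) (prod_config V1 F)"
    using is_face_prod_config_right[OF F(1)] unfolding is_facet_def by blast
qed

lemma card_values_le_1_if_empty_facet:
  assumes "finite V" "facet_defining V \<delta> c" "{v \<in> V. lin_fun \<delta> c v = 0} = {}"
  shows "card (lin_fun \<delta> c ` V) \<le> 1"
proof -
  have "is_facet V {}" using assms(2,3) unfolding facet_defining_def by simp
  then obtain v where "V = {v}" using empty_facet_imp_singleton[OF assms(1)] by blast
  then show ?thesis by simp
qed

lemma facet_defining_prod_config_left:
  assumes "finite V1" "V2 \<noteq> {}" "facet_defining V1 \<delta> c" "{x \<in> V1. lin_fun \<delta> c x = 0} \<noteq> {}"
  shows "facet_defining (prod_config V1 V2) \<delta> (vec_join c 0)"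
  using assms
  by (simp add: facet_defining_def zero_set_prod_config_left is_facet_prod_config_left_iff
      nonneg_on_prod_config_left)

lemma facet_defining_prod_config_right:
  assumes "finite V1" "V1 \<noteq> {}" "facet_defining V2 \<delta> c" "{y \<in> V2. lin_fun \<delta> c y = 0} \<noteq> {}"
  shows "facet_defining (prod_config V1 V2) \<delta> (vec_join 0 c)"
  using assms
  by (simp add: facet_defining_def zero_set_prod_config_right is_facet_prod_config_right_iff
      nonneg_on_prod_config_right)

lemma k_level_prod_config_imp_left:
  assumes "finite V1" "finite V2" "V2 \<noteq> {}" "k_level (prod_config V1 V2) k"
  shows "k_level V1 k"
  unfolding k_level_def
proof (intro allI impI)
  fix \<delta> c assume fd: "facet_defining V1 \<delta> c"
  show "card (lin_fun \<delta> c ` V1) \<le> k"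
  proof (cases "{x \<in> V1. lin_fun \<delta> c x = 0} = {}")
    case True
    moreover have "V1 \<noteq> {}" using fd unfolding facet_defining_def is_facet_def by blast
    then have "1 \<le> k" using k_level_ge_1[OF finite_prod_config[OF assms(1,2)] _ assms(4)] assms(3) by simp
    ultimately show ?thesis using card_values_le_1_if_empty_facet[OF assms(1) fd] by simp
  next
    case False
    then have "card (lin_fun \<delta> (vec_join c 0) ` prod_config V1 V2) \<le> k"
      using facet_defining_prod_config_left[OF assms(1,3) fd] assms(4) unfolding k_level_def by blast
    moreover have "lin_fun \<delta> (vec_join c 0) ` prod_config V1 V2 = lin_fun \<delta> c ` V1"
      by (rule image_prod_config_left[OF assms(3)]) (simp add: lin_fun_vec_join_left)
    ultimately show ?thesis by simp
  qed
qed

lemma k_level_prod_config_imp_right: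
  assumes "finite V1" "V1 \<noteq> {}" "finite V2" "k_level (prod_config V1 V2) k"
  shows "k_level V2 k"
  unfolding k_level_def
proof (intro allI impI)
  fix \<delta> c assume fd: "facet_defining V2 \<delta> c"
  show "card (lin_fun \<delta> c ` V2) \<le> k"
  proof (cases "{y \<in> V2. lin_fun \<delta> c y = 0} = {}")
    case True
    moreover have "V2 \<noteq> {}" using fd unfolding facet_defining_def is_facet_def by blast
    then have "1 \<le> k" using k_level_ge_1[OF finite_prod_config[OF assms(1,3)] _ assms(4)] assms(2) by simp
    ultimately show ?thesis using card_values_le_1_if_empty_facet[OF assms(3) fd] by simp
  next
    case False
    then have "card (lin_fun \<delta> (vec_join 0 c) ` prod_config V1 V2) \<le> k"
      using facet_defining_prod_config_right[OF assms(1,2) fd] assms(4) unfolding k_level_def by blast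
    moreover have "lin_fun \<delta> (vec_join 0 c) ` prod_config V1 V2 = lin_fun \<delta> c ` V2"
      by (rule image_prod_config_right[OF assms(2)]) (simp add: lin_fun_vec_join_right)
    ultimately show ?thesis by simp
  qed
qed

text \<open>The product face \<open>Z1 \<times> V2\<close> contains \<open>Z1 \<times> Z2\<close> and is proper unless \<open>Z1 = V1\<close>.\<close>
lemma is_facet_prod_config_full_factor:
  assumes "is_facet (prod_config V1 V2) (prod_config Z1 Z2)"
    and "is_face V1 Z1" "Z1 \<noteq> {}" "Z2 \<subseteq> V2" "V2 \<noteq> {}"
  shows "Z2 = V2 \<or> Z1 = V1"
proof (rule disjCI)
  assume "Z1 \<noteq> V1"
  then have "prod_config Z1 V2 \<noteq> prod_config V1 V2"
    using prod_config_eq_iff[OF assms(3,5)] by simp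
  moreover have "prod_config Z1 Z2 \<subseteq> prod_config Z1 V2" using assms(4) by (rule prod_config_mono[rotated]) simp
  ultimately have "prod_config Z1 V2 = prod_config Z1 Z2"
    using assms(1) is_face_prod_config_left[OF assms(2)] unfolding is_facet_def by blast
  then show "Z2 = V2" using prod_config_eq_iff[OF assms(3,5)] by simp
qed

lemma facet_defining_prod_config_cases:
  assumes "finite V1" "V1 \<noteq> {}" "V2 \<noteq> {}" and fd: "facet_defining (prod_config V1 V2) \<delta> c"
    and "{z \<in> prod_config V1 V2. lin_fun \<delta> c z = 0} \<noteq> {}"
  obtains \<delta>1 where "facet_defining V1 \<delta>1 (vec_fst c)"
      "lin_fun \<delta> c ` prod_config V1 V2 = lin_fun \<delta>1 (vec_fst c) ` V1"
    | \<delta>2 where "facet_defining V2 \<delta>2 (vec_snd c)"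
      "lin_fun \<delta> c ` prod_config V1 V2 = lin_fun \<delta>2 (vec_snd c) ` V2"
proof -
  let ?P = "prod_config V1 V2"
  obtain \<delta>1 where nn1: "nonneg_on V1 (lin_fun \<delta>1 (vec_fst c))"
    and nn2: "nonneg_on V2 (lin_fun (\<delta> - \<delta>1) (vec_snd c))"
    using nonneg_on_prod_config_split[OF assms(1,2)] fd unfolding facet_defining_def by blast
  define Z1 where "Z1 = {x \<in> V1. lin_fun \<delta>1 (vec_fst c) x = 0}"
  define Z2 where "Z2 = {y \<in> V2. lin_fun (\<delta> - \<delta>1) (vec_snd c) y = 0}"
  have "{z \<in> ?P. lin_fun \<delta> c z = 0} = prod_config Z1 Z2"
    unfolding Z1_def Z2_def by (rule zero_set_prod_config[OF nn1 nn2 lin_fun_vec_join])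
  then have facet: "is_facet ?P (prod_config Z1 Z2)" and "Z1 \<noteq> {}" "Z2 \<noteq> {}"
    using fd assms(5) unfolding facet_defining_def by auto
  moreover have "is_face V1 Z1" using nn1 unfolding is_face_def Z1_def by blast
  ultimately have "Z2 = V2 \<or> Z1 = V1"
    using is_facet_prod_config_full_factor assms(3) unfolding Z2_def by blast
  then show ?thesis
  proof
    assume "Z2 = V2"
    then have "is_facet V1 Z1"
      using facet is_facet_prod_config_left_iff[OF assms(1) \<open>Z1 \<noteq> {}\<close> assms(3)] by simp
    then have "facet_defining V1 \<delta>1 (vec_fst c)"
      using nn1 unfolding facet_defining_def Z1_def by simp
    moreover have "lin_fun \<delta> c ` ?P = lin_fun \<delta>1 (vec_fst c) ` V1"
    proof (rule image_prod_config_left[OF assms(3)])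
      fix x y assume "x \<in> V1" "y \<in> V2"
      then have "lin_fun (\<delta> - \<delta>1) (vec_snd c) y = 0" using \<open>Z2 = V2\<close> unfolding Z2_def by blast
      then show "lin_fun \<delta> c (vec_join x y) = lin_fun \<delta>1 (vec_fst c) x"
        by (simp add: lin_fun_vec_join[of \<delta> c x y \<delta>1])
    qed
    ultimately show ?thesis by (rule that(1))
  next
    assume "Z1 = V1"
    then have "is_facet V2 Z2"
      using facet is_facet_prod_config_right_iff[OF assms(1,2) \<open>Z2 \<noteq> {}\<close>] by simp
    then have "facet_defining V2 (\<delta> - \<delta>1) (vec_snd c)"
      using nn2 unfolding facet_defining_def Z2_def by simp
    moreover have "lin_fun \<delta> c ` ?P = lin_fun (\<delta> - \<delta>1) (vec_snd c) ` V2"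
    proof (rule image_prod_config_right[OF assms(2)])
      fix x y assume "x \<in> V1" "y \<in> V2"
      then have "lin_fun \<delta>1 (vec_fst c) x = 0" using \<open>Z1 = V1\<close> unfolding Z1_def by blast
      then show "lin_fun \<delta> c (vec_join x y) = lin_fun (\<delta> - \<delta>1) (vec_snd c) y"
        by (simp add: lin_fun_vec_join[of \<delta> c x y \<delta>1])
    qed
    ultimately show ?thesis by (rule that(2))
  qed
qed

lemma k_level_prod_config:
  assumes "finite V1" "V1 \<noteq> {}" "finite V2" "V2 \<noteq> {}" "k_level V1 k" "k_level V2 k"
  shows "k_level (prod_config V1 V2) k"
  unfolding k_level_def
proof (intro allI impI)
  fix \<delta> c assume fd: "facet_defining (prod_config V1 V2) \<delta> c"
  show "card (lin_fun \<delta> c ` prod_config V1 V2) \<le> k"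
  proof (cases "{z \<in> prod_config V1 V2. lin_fun \<delta> c z = 0} = {}")
    case True
    then show ?thesis
      using card_values_le_1_if_empty_facet[OF finite_prod_config[OF assms(1,3)] fd]
        k_level_ge_1[OF assms(1,2,5)] by simp
  next
    case False
    then show ?thesis
      using assms(5,6) unfolding k_level_def
      by (cases rule: facet_defining_prod_config_cases[OF assms(1,2,4) fd]) auto
  qed
qed

lemma k_level_prod_config_iff:
  assumes "finite V1" "V1 \<noteq> {}" "finite V2" "V2 \<noteq> {}"
  shows "k_level (prod_config V1 V2) k \<longleftrightarrow> k_level V1 k \<and> k_level V2 k"
  using k_level_prod_config[OF assms] k_level_prod_config_imp_left[OF assms(1,3,4)]
    k_level_prod_config_imp_right[OF assms(1,2,3)] by blast

theorem proposition2p2: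
  fixes V1 :: "(real^'n::finite) set" and V2 :: "(real^'m::finite) set"
  assumes "finite V1" "V1 \<noteq> {}" "finite V2" "V2 \<noteq> {}"
  shows "theta_rank (prod_config V1 V2) = max (theta_rank V1) (theta_rank V2)
       \<and> levelness (prod_config V1 V2) = max (levelness V1) (levelness V2)"
proof
  have "theta_rank (prod_config V1 V2) = (LEAST k. theta_exact V1 k \<and> theta_exact V2 k)"
    unfolding theta_rank_eq_Least
    by (rule arg_cong[where f = Least]) (simp add: fun_eq_iff theta_exact_prod_config_iff assms)
  also have "\<dots> = max (theta_rank V1) (theta_rank V2)"
    unfolding theta_rank_eq_Least
    by (rule Least_conj_eq_max[OF mono_theta_exact mono_theta_exact
          theta_exact_card[OF assms(1)] theta_exact_card[OF assms(3)]])
  finally show "theta_rank (prod_config V1 V2) = max (theta_rank V1) (theta_rank V2)" .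
next
  have "levelness (prod_config V1 V2) = (LEAST k. k_level V1 k \<and> k_level V2 k)"
    by (simp add: levelness_def k_level_prod_config_iff assms)
  also have "\<dots> = max (levelness V1) (levelness V2)"
    unfolding levelness_def
    by (rule Least_conj_eq_max[OF mono_k_level mono_k_level
          k_level_card[OF assms(1)] k_level_card[OF assms(3)]])
  finally show "levelness (prod_config V1 V2) = max (levelness V1) (levelness V2)" .
qed

end
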